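(* Let $h_1,\dots,h_p\in G_0$ and let $k_1,\dots,k_p$ be positive integers. If $D_{\widehat{h_p}\cdots\widehat{h_1}}=\emptyset$ then $\xi_{h_1}^{(k_1)}\xi_{h_2}^{(k_2)}\cdots\xi_{h_p}^{(k_p)}=0$. If $D_{\widehat{h_p}\cdots\widehat{h_1}}\neq\emptyset$, then the $i$-th row of the matrix $\xi_{h_1}^{(k_1)}\cdots\xi_{h_p}^{(k_p)}$ is nonzero if and only if $i\in D_{\widehat{h_p}\cdots\widehat{h_1}}$, and in this case, with $j=\widehat{h_p}\cdots\widehat{h_1}(i)$, the only nonzero entry of the $i$-th row is in the $j$-th column and is a monomial of $\Omega$.
   Context: Let $F$ be an infinite field, $G$ a group, $(g_1,\dots,g_n)\in G^n$ with pairwise distinct entries, and give $A=M_n(F)$ the elementary grading: $A_g$ is spanned by the matrix units $e_{ij}$ with $g_i^{-1}g_j=g$. Let $B$ be the subalgebra of $M_n(F)$ with vector space basis a set of matrix units $\{e_{i_1j_1},\dots,e_{i_lj_l}\}$, graded by $B_g=B\cap A_g$, and $G_0=\{g: B_g\neq0\}$. For $g\in G_0$ let $D_{\widehat g}$ be the set of indices $i$ such that $e_{ij}\in B_g$ for some $j$; since the $g_i$ are pairwise distinct such $j$ is unique, denoted $\widehat g(i)$, giving a partial map $\widehat g$ with domain $D_{\widehat g}$. For $h_1,\dots,h_p\in G_0$, $\widehat{h_p}\cdots\widehat{h_1}$ denotes the composition of these partial maps and $D_{\widehat{h_p}\cdots\widehat{h_1}}$ is the set of $i\in\{i_1,\dots,i_l\}$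 for which $\widehat{h_p}(\cdots(\widehat{h_1}(i))\cdots)$ is defined. Let $\Omega=F[\xi_{ij}^{(k)}: i,j=1,\dots,n;\ k=1,2,\dots]$ be the commutative polynomial ring, and for $g\in G_0$, $k\ge1$ define the graded generic element $\xi_g^{(k)}=\sum_{i\in D_{\widehat g}}\xi^{(k)}_{i\widehat g(i)}e_{i\widehat g(i)}\in M_n(\Omega)$. *)

theory Defs
  imports "HOL-Analysis.Finite_Cartesian_Product" "HOL-Library.Poly_Mapping" "HOL-Algebra.Group"
begin

(* Indices 1..n are modelled by a finite type 'n; g :: 'n => 'g are the elements g_1..g_n.
   The basis of B is a set S of index pairs (i,j) (matrix units e_ij).
   Omega = F[xi_ij^(k)] is modelled as polynomials with variables indexed by ('n * 'n * nat):
   type  (('n * 'n * nat) =>0 nat) =>0 'a  (monomial exponent vectors to coefficients). *)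

type_synonym ('n, 'a) omega = "(('n \<times> 'n \<times> nat) \<Rightarrow>\<^sub>0 nat) \<Rightarrow>\<^sub>0 'a"

definition degr :: "('g, 'b) monoid_scheme \<Rightarrow> ('n \<Rightarrow> 'g) \<Rightarrow> 'n \<Rightarrow> 'n \<Rightarrow> 'g" where
  "degr G g i j = inv\<^bsub>G\<^esub> (g i) \<otimes>\<^bsub>G\<^esub> g j"

(* G_0 = { g : B_g <> 0 } *)
definition G0 :: "('g, 'b) monoid_scheme \<Rightarrow> ('n \<Rightarrow> 'g) \<Rightarrow> ('n \<times> 'n) set \<Rightarrow> 'g set" where
  "G0 G g S = {h. \<exists>i j. (i, j) \<in> S \<and> degr G g i j = h}"

definition hatD :: "('g, 'b) monoid_scheme \<Rightarrow> ('n \<Rightarrow> 'g) \<Rightarrow> ('n \<times> 'n) set \<Rightarrow> 'g \<Rightarrow> 'n set" where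
  "hatD G g S h = {i. \<exists>j. (i, j) \<in> S \<and> degr G g i j = h}"

definition hat :: "('g, 'b) monoid_scheme \<Rightarrow> ('n \<Rightarrow> 'g) \<Rightarrow> ('n \<times> 'n) set \<Rightarrow> 'g \<Rightarrow> 'n \<Rightarrow> 'n option" where
  "hat G g S h i = (if i \<in> hatD G g S h
      then Some (THE j. (i, j) \<in> S \<and> degr G g i j = h) else None)"

(* hat h_p o ... o hat h_1 applied to i, for hs = [h_1,...,h_p] *)
definition hat_comp :: "('g, 'b) monoid_scheme \<Rightarrow> ('n \<Rightarrow> 'g) \<Rightarrow> ('n \<times> 'n) set \<Rightarrow> 'g list \<Rightarrow> 'n \<Rightarrow> 'n option" where
  "hat_comp G g S hs i = foldl (\<lambda>oi h. Option.bind oi (hat G g S h)) (Some i) hs"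

definition hat_comp_dom :: "('g, 'b) monoid_scheme \<Rightarrow> ('n \<Rightarrow> 'g) \<Rightarrow> ('n \<times> 'n) set \<Rightarrow> 'g list \<Rightarrow> 'n set" where
  "hat_comp_dom G g S hs = {i. i \<in> fst ` S \<and> hat_comp G g S hs i \<noteq> None}"

definition xi_var :: "'n \<Rightarrow> 'n \<Rightarrow> nat \<Rightarrow> ('n, 'a::comm_ring_1) omega" where
  "xi_var i j k = Poly_Mapping.single (Poly_Mapping.single (i, j, k) 1) 1"

definition generic :: "('g, 'b) monoid_scheme \<Rightarrow> ('n \<Rightarrow> 'g) \<Rightarrow> ('n \<times> 'n) set \<Rightarrow> 'g \<Rightarrow> nat
    \<Rightarrow> ('n, 'a::comm_ring_1) omega ^ 'n ^ 'n" where
  "generic G g S h k = (\<chi> a b. if a \<in> hatD G g S h \<and> hat G g S h a = Some b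
      then xi_var a b k else 0)"

definition generic_prod :: "('g, 'b) monoid_scheme \<Rightarrow> ('n::finite \<Rightarrow> 'g) \<Rightarrow> ('n \<times> 'n) set \<Rightarrow> 'g list
    \<Rightarrow> nat list \<Rightarrow> ('n, 'a::comm_ring_1) omega ^ 'n ^ 'n" where
  "generic_prod G g S hs ks = foldr (**) (map2 (generic G g S) hs ks) (mat 1)"

definition is_monomial :: "((('v \<Rightarrow>\<^sub>0 nat) \<Rightarrow>\<^sub>0 'a::comm_ring_1)) \<Rightarrow> bool" where
  "is_monomial p \<longleftrightarrow> (\<exists>m. p = Poly_Mapping.single m 1)"

end

theory Submission
  imports Defs
begin

text \<open>Row \<open>i\<close> of a generic element \<open>\<xi>\<^sub>h\<^sup>(\<^sup>k\<^sup>)\<close> is zero unless \<open>hat h\<close> is defined at \<open>i\<close>, and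
  then its only nonzero entry is a variable, at column \<open>hat h i\<close>. Multiplying \<open>M\<close> on the left by
  it thus replaces row \<open>i\<close> of \<open>M\<close> by that variable times row \<open>hat h i\<close>, or by zero. Induction on
  the number of factors gives the shape of the rows of the product; only this partial-map
  structure is used.\<close>

lemma hat_Some_imp_hatD: "hat G g S h i = Some j \<Longrightarrow> i \<in> hatD G g S h"
  by (simp add: hat_def split: if_splits)

lemma hat_comp_Nil [simp]: "hat_comp G g S [] i = Some i"
  by (simp add: hat_comp_def)

lemma hat_comp_Cons:
  "hat_comp G g S (h # hs) i = Option.bind (hat G g S h i) (hat_comp G g S hs)"
proof -
  have foldl_None: "foldl (\<lambda>oi h. Option.bind oi (hat G g S h)) None hs = None" for hs
    by (induction hs) auto
  show ?thesis
    by (cases "hat G g S h i") (auto simp: hat_comp_def foldl_None)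
qed

lemma hat_comp_dom_eq:
  assumes "hs \<noteq> []"
  shows "hat_comp_dom G g S hs = {i. hat_comp G g S hs i \<noteq> None}"
proof -
  obtain h hs' where hs: "hs = h # hs'"
    using assms by (cases hs) auto
  have "i \<in> fst ` S" if "hat_comp G g S hs i \<noteq> None" for i
    using that hat_Some_imp_hatD[of G g S h i]
    by (force simp: hs hat_comp_Cons hatD_def split: bind_splits)
  then show ?thesis
    by (auto simp: hat_comp_dom_def)
qed

lemma is_monomial_nonzero: "is_monomial p \<Longrightarrow> p \<noteq> 0"
  unfolding is_monomial_def by (metis lookup_single_eq lookup_zero zero_neq_one)

lemma is_monomial_mult: "is_monomial p \<Longrightarrow> is_monomial q \<Longrightarrow> is_monomial (p * q)"
  unfolding is_monomial_def by (auto simp: mult_single)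

lemma is_monomial_xi_var: "is_monomial (xi_var i j k)"
  by (auto simp: xi_var_def is_monomial_def)

lemma generic_entry:
  "generic G g S h k $ i $ j = (if hat G g S h i = Some j then xi_var i j k else 0)"
  by (auto simp: generic_def dest: hat_Some_imp_hatD)

lemma generic_mult_entry:
  fixes M :: "('n::finite, 'a::comm_ring_1) omega ^ 'n ^ 'n"
  shows "(generic G g S h k ** M) $ i $ j =
    (case hat G g S h i of None \<Rightarrow> 0 | Some x \<Rightarrow> xi_var i x k * M $ x $ j)"
  by (cases "hat G g S h i")
    (simp_all add: matrix_matrix_mult_def generic_entry if_distrib[of "\<lambda>z. z * _"] cong: if_cong)

lemma generic_prod_Cons:
  "generic_prod G g S (h # hs) (k # ks) = generic G g S h k ** generic_prod G g S hs ks"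
  by (simp add: generic_prod_def)

lemma generic_prod_row:
  fixes g :: "'n::finite \<Rightarrow> 'g"
  assumes "length ks = length hs"
  shows "case hat_comp G g S hs i of
      None \<Rightarrow> \<forall>j. (generic_prod G g S hs ks :: ('n, 'a::comm_ring_1) omega ^ 'n ^ 'n) $ i $ j = 0
    | Some x \<Rightarrow> (\<forall>j. j \<noteq> x \<longrightarrow> (generic_prod G g S hs ks :: ('n, 'a) omega ^ 'n ^ 'n) $ i $ j = 0)
        \<and> is_monomial ((generic_prod G g S hs ks :: ('n, 'a) omega ^ 'n ^ 'n) $ i $ x)"
  using assms
proof (induction hs arbitrary: ks i)
  case Nil
  then show ?case
    by (auto simp: generic_prod_def mat_def is_monomial_def intro: exI[of _ 0])
next
  case (Cons h hs)
  then obtain k ks' where ks: "ks = k # ks'" and len: "length ks' = length hs"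
    by (cases ks) auto
  show ?case
  proof (cases "hat G g S h i")
    case None
    then show ?thesis
      by (simp add: ks generic_prod_Cons generic_mult_entry hat_comp_Cons)
  next
    case (Some x)
    then show ?thesis
      using Cons.IH[OF len, of x]
      by (auto simp: ks generic_prod_Cons generic_mult_entry hat_comp_Cons
          intro: is_monomial_mult is_monomial_xi_var split: option.splits)
  qed
qed

lemma generic_prod_entry_eq_0:
  fixes g :: "'n::finite \<Rightarrow> 'g"
  assumes "length ks = length hs" and "hat_comp G g S hs i = None"
  shows "(generic_prod G g S hs ks :: ('n, 'a::comm_ring_1) omega ^ 'n ^ 'n) $ i $ j = 0"
  using generic_prod_row[OF assms(1), of G g S i, where 'a='a] assms(2) by simp

lemma generic_prod_entry_nonzero_iff:
  fixes g :: "'n::finite \<Rightarrow> 'g"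
  assumes "length ks = length hs" and "hat_comp G g S hs i = Some x"
  shows "(generic_prod G g S hs ks :: ('n, 'a::comm_ring_1) omega ^ 'n ^ 'n) $ i $ j \<noteq> 0
    \<longleftrightarrow> j = x"
  using generic_prod_row[OF assms(1), of G g S i, where 'a='a] assms(2)
  by (auto dest: is_monomial_nonzero)

lemma generic_prod_entry_monomial:
  fixes g :: "'n::finite \<Rightarrow> 'g"
  assumes "length ks = length hs" and "hat_comp G g S hs i = Some x"
  shows "is_monomial ((generic_prod G g S hs ks :: ('n, 'a::comm_ring_1) omega ^ 'n ^ 'n) $ i $ x)"
  using generic_prod_row[OF assms(1), of G g S i, where 'a='a] assms(2) by simp

theorem mainTheorem3:
  fixes G :: "('g, 'b) monoid_scheme"
    and g :: "'n::finite \<Rightarrow> 'g"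
    and S :: "('n \<times> 'n) set"
    and hs :: "'g list"
    and ks :: "nat list"
  assumes grp: "group G"
    and g_carrier: "\<And>i. g i \<in> carrier G"
    and g_distinct: "inj g"
    and F_infinite: "infinite (UNIV :: 'a::field set)"
    and B_subalg: "\<And>i j l. (i, j) \<in> S \<Longrightarrow> (j, l) \<in> S \<Longrightarrow> (i, l) \<in> S"
    and hs_ne: "hs \<noteq> []"
    and len: "length ks = length hs"
    and hs_G0: "set hs \<subseteq> G0 G g S"
    and ks_pos: "\<forall>k \<in> set ks. 1 \<le> k"
  shows "(hat_comp_dom G g S hs = {} \<longrightarrow> (generic_prod G g S hs ks :: ('n, 'a) omega ^ 'n ^ 'n) = 0)
       \<and> (hat_comp_dom G g S hs \<noteq> {} \<longrightarrow>
           (\<forall>i. (\<exists>j. (generic_prod G g S hs ks :: ('n, 'a) omega ^ 'n ^ 'n) $ i $ j \<noteq> 0)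
                  \<longleftrightarrow> i \<in> hat_comp_dom G g S hs)
         \<and> (\<forall>i \<in> hat_comp_dom G g S hs.
              (\<forall>j. (generic_prod G g S hs ks :: ('n, 'a) omega ^ 'n ^ 'n) $ i $ j \<noteq> 0
                     \<longleftrightarrow> j = the (hat_comp G g S hs i))
            \<and> is_monomial ((generic_prod G g S hs ks :: ('n, 'a) omega ^ 'n ^ 'n) $ i $ the (hat_comp G g S hs i))))"
proof -
  let ?P = "generic_prod G g S hs ks :: ('n, 'a) omega ^ 'n ^ 'n"
  have dom: "i \<in> hat_comp_dom G g S hs \<longleftrightarrow> hat_comp G g S hs i \<noteq> None" for i
    using hat_comp_dom_eq[OF hs_ne, of G g S] by simp
  have zero_row: "?P $ i $ j = 0" if "i \<notin> hat_comp_dom G g S hs" for i j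
    using that dom generic_prod_entry_eq_0[OF len] by blast
  have nonzero_iff: "?P $ i $ j \<noteq> 0 \<longleftrightarrow> j = the (hat_comp G g S hs i)"
    and monomial: "is_monomial (?P $ i $ the (hat_comp G g S hs i))"
    if "i \<in> hat_comp_dom G g S hs" for i j
    using that dom generic_prod_entry_nonzero_iff[OF len] generic_prod_entry_monomial[OF len]
    by force+
  show ?thesis
    using zero_row nonzero_iff monomial by (auto simp: vec_eq_iff)
qed

end
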